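(* Let $w$ be a primitive word over $\mathcal{A}=\{a_1<a_2<\dots<a_k\}$ that is $\pi$-clustering for $\mathcal{A}$ for some $\pi\in S_{\mathcal{A}}$. Let $a,b$ be distinct letters. (1) If $\mu\in S_{\mathcal{A}}$, then $\mu(w)$ is $\pi'$-clustering for $\mathcal{A}'=\{\mu(a_1)<\dots<\mu(a_k)\}$ for some $\pi'\in S_{\mathcal{A}'}$. (2) If $a\in\mathcal{A}$, $b=a_1$, $\pi^{-1}(a)=a_i$ and $\pi^{-1}(b)=a_{i+1}$ for some $1\le i<k$, then $\alpha_{a,b}(w)\in\mathcal{A}^*$ is $\pi'$-clustering for $\mathcal{A}$ for some $\pi'\in S_{\mathcal{A}}$. (3) If $a\in\mathcal{A}$, $b=a_k$, $\pi^{-1}(b)=a_i$ and $\pi^{-1}(a)=a_{i+1}$ for some $1\le i<k$, then $\alpha_{a,b}(w)\in\mathcal{A}^*$ is $\pi'$-clustering for $\mathcal{A}$ for some $\pi'\in S_{\mathcal{A}}$. (4) If $\pi^{-1}(b)=a_1$, $a=a_i$ and $b=a_{i+1}$ for some $1\le i<k$, then $\tilde{\alpha}_{a,b}(w)$ is $\pi'$-clustering for $\mathcal{A}'=\{a_i<a_1<\dots<a_{i-1}<a_{i+1}<\dots<a_k\}$ for some $\pi'\in S_{\mathcal{A}'}$. (5) If $\pi^{-1}(b)=a_k$, $b=a_i$ and $a=a_{i+1}$ for some $1\le i<k$, then $\tilde{\alpha}_{a,b}(w)$ is $\pi'$-clustering for $\mathcal{A}'=\{a_1<\dots<a_i<a_{i+2}<\dots<a_k<a_{i+1}\}$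 for some $\pi'\in S_{\mathcal{A}'}$. (6) If $a\in\mathcal{A}$ and $b\notin\mathcal{A}$, then $\alpha_{a,b}(w)$ is $\pi'$-clustering for $\mathcal{A}'=\{a_1<\dots<a_k<b\}$ for some $\pi'\in S_{\mathcal{A}'}$, and it is also $\pi''$-clustering for $\mathcal{A}''=\{b<a_1<\dots<a_k\}$ for some $\pi''\in S_{\mathcal{A}''}$. (7) If $\mathcal{B}=\{b_1<\dots<b_h\}$ is disjoint from $\mathcal{A}$, then $\iota_{\mathcal{A},\mathcal{B}}(w)$ is $\pi'$-clustering for $\mathcal{A}'=\{a_1<\dots<a_k<b_1<\dots<b_h\}$ for some $\pi'\in S_{\mathcal{A}'}$.
   Context: A word is primitive if it is not of the form $u^d$ with $d\ge2$. For an ordered alphabet $\mathcal{C}=\{c_1<\dots<c_m\}$ and a word $v$ of length $n$ over $\mathcal{C}$, $\mathrm{bwt}_{\mathcal{C}}(v)$ is the word formed by the last letters of the $n$ cyclic rotations of $v$ sorted lexicographically with respect to the order of $\mathcal{C}$. For $\tau\in S_{\mathcal{C}}$ (a permutation of $\mathcal{C}$), $v$ is $\tau$-clustering for $\mathcal{C}$ if $\mathrm{bwt}_{\mathcal{C}}(v)=\tau(c_1)^{k_1}\cdots\tau(c_m)^{k_m}$ with $k_i=|v|_{\tau(c_i)}$ (number of occurrences). A permutation $\mu$ acts on words letter by letter. For distinct letters $a,b$, $\alpha_{a,b}$ is the morphism $a\mapsto ab$, $c\mapsto c$ ($c\neq a$), and $\tilde{\alpha}_{a,b}$ is the morphism $a\mapsto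 ba$, $c\mapsto c$ ($c\neq a$). $\iota_{\mathcal{A},\mathcal{B}}$ is the inclusion $\mathcal{A}^*\to(\mathcal{A}\sqcup\mathcal{B})^*$. *)

theory Defs
  imports "HOL-Combinatorics.Permutations" "HOL-Library.List_Lexorder"
begin

text \<open>An ordered alphabet c_1 < ... < c_m is a distinct list C; the order on letters
is the position in C (rank = number of letters preceding it). Words are lists.\<close>

definition primitive :: "'a list \<Rightarrow> bool" where
  "primitive v \<longleftrightarrow> \<not> (\<exists>u d. d \<ge> 2 \<and> v = concat (replicate d u))"

text \<open>Lexicographic order of words with respect to the order of C: compare
the words after mapping each letter to its rank in C.\<close>
definition rotations :: "'a list \<Rightarrow> 'a list list" where
  "rotations v = map (\<lambda>i. rotate i v) [0..<length v]"

definition bwt :: "'a list \<Rightarrow> 'a list \<Rightarrow> 'a list" where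
  "bwt C v = map last (sort_key (\<lambda>r. map (\<lambda>c. length (takeWhile (\<lambda>x. x \<noteq> c) C)) r) (rotations v))"

definition clustering :: "'a list \<Rightarrow> ('a \<Rightarrow> 'a) \<Rightarrow> 'a list \<Rightarrow> bool" where
  "clustering C \<tau> v \<longleftrightarrow> set v \<subseteq> set C \<and> \<tau> permutes set C \<and>
     bwt C v = concat (map (\<lambda>c. replicate (count_list v (\<tau> c)) (\<tau> c)) C)"

definition alpha :: "'a \<Rightarrow> 'a \<Rightarrow> 'a list \<Rightarrow> 'a list" where
  "alpha a b v = concat (map (\<lambda>c. if c = a then [a, b] else [c]) v)"

definition alpha_tilde :: "'a \<Rightarrow> 'a \<Rightarrow> 'a list \<Rightarrow> 'a list" where
  "alpha_tilde a b v = concat (map (\<lambda>c. if c = a then [b, a] else [c]) v)"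

end

theory Submission
  imports Defs
begin

text \<open>
  Let D = \<pi>(a1) ... \<pi>(ak) be the order in which the letters occur in the BWT. Then w is
  \<pi>-clustering for A if and only if, for any two rotations x < y of w in the lexicographic
  order induced by A, the letter last x does not come after last y in D; all seven
  statements are proved through this criterion.
  A rotation of alpha a b w (or of alpha_tilde a b w) is either the image of a rotation of w,
  and these images keep their relative order, or it cuts the image ab (resp. ba) of an
  occurrence of a, and all these rotations end with a (resp. b); the hypotheses on the
  positions of a and b in A and D are what is needed to place the cut rotations consistently.
  Reversing both orders preserves clustering, which reduces (3) and (5) to (2) and (4).
  Letters that do not occur in w can be inserted anywhere into both orders, which gives (7)
  and reduces (6) to (2) and (3).
\<close>

section \<open>Ranks in an ordered alphabet\<close>

text \<open>The sort key of bwt; a letter outside C gets the junk rank length C.\<close>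

definition rank :: "'a list \<Rightarrow> 'a \<Rightarrow> nat" where
  "rank C c = length (takeWhile (\<lambda>x. x \<noteq> c) C)"

lemma rank_Nil [simp]: "rank [] c = 0"
  by (simp add: rank_def)

lemma rank_Cons [simp]: "rank (x # C) c = (if x = c then 0 else Suc (rank C c))"
  by (simp add: rank_def)

lemma rank_append:
  "rank (C @ C') c = (if c \<in> set C then rank C c else length C + rank C' c)"
  by (induction C) auto

lemma rank_less_length: "c \<in> set C \<Longrightarrow> rank C c < length C"
  by (induction C) auto

lemma nth_rank: "c \<in> set C \<Longrightarrow> C ! rank C c = c"
  by (induction C) auto

lemma rank_nth: "distinct C \<Longrightarrow> j < length C \<Longrightarrow> rank C (C ! j) = j"
  by (induction C arbitrary: j) (auto simp: nth_Cons split: nat.split)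

lemma inj_on_rank: "inj_on (rank C) (set C)"
  by (metis inj_onI nth_rank)

lemma rank_map: "inj_on \<mu> (set C) \<Longrightarrow> c \<in> set C \<Longrightarrow> rank (map \<mu> C) (\<mu> c) = rank C c"
  by (induction C) (auto simp: inj_on_def)

lemma rank_rev:
  "distinct C \<Longrightarrow> c \<in> set C \<Longrightarrow> rank (rev C) c = length C - Suc (rank C c)"
  by (induction C) (auto simp: rank_append less_Suc_eq_le rank_less_length)

lemma rank_eq_rank_iff: "c \<in> set C \<Longrightarrow> rank C c = rank C d \<longleftrightarrow> c = d"
  by (induction C) auto

lemma rank_rev_less_iff:
  assumes "distinct C" "c \<in> set C" "d \<in> set C"
  shows "rank (rev C) c < rank (rev C) d \<longleftrightarrow> rank C d < rank C c"
proof -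
  have "rank C c < length C" "rank C d < length C"
    using assms by (simp_all add: rank_less_length)
  then show ?thesis
    using assms by (simp add: rank_rev) arith
qed

lemma rank_remove1:
  "c \<in> set C \<Longrightarrow> c \<noteq> a \<Longrightarrow>
    rank (remove1 a C) c = (if rank C c < rank C a then rank C c else rank C c - 1)"
proof (induction C)
  case (Cons x C)
  have "rank C c \<noteq> rank C a" if "c \<in> set C"
    using that Cons.prems(2) rank_eq_rank_iff by metis
  with Cons show ?case by auto
qed simp

lemma rank_Cons_remove1:
  assumes "c \<in> set C" "c \<noteq> a"
  shows "rank (a # remove1 a C) c = (if rank C c < rank C a then Suc (rank C c) else rank C c)"
proof -
  have "rank C c \<noteq> rank C a"
    using assms rank_eq_rank_iff by metis
  then show ?thesis
    using assms by (simp add: rank_remove1)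
qed

lemma rank_Cons_remove1_less_iff:
  assumes "c \<in> set C" "d \<in> set C" "c \<noteq> a" "d \<noteq> a"
  shows "rank (a # remove1 a C) c < rank (a # remove1 a C) d \<longleftrightarrow> rank C c < rank C d"
proof -
  have "rank C c \<noteq> rank C a" "rank C d \<noteq> rank C a"
    using assms rank_eq_rank_iff by metis+
  then show ?thesis
    unfolding rank_Cons_remove1[OF assms(1,3)] rank_Cons_remove1[OF assms(2,4)] by auto
qed

lemma rank_Cons_remove1_relabel:
  assumes "c \<in> set D" "b \<in> set D" "rank D b = Suc (rank D a)"
  shows "rank (a # remove1 a D) (if c = a then b else c) =
    (if rank D c \<le> rank D a then Suc (rank D c) else rank D c)"
proof (cases "c = a")
  case True
  moreover have "b \<noteq> a"
    using assms(3) by auto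
  ultimately show ?thesis
    using assms(2,3) rank_Cons_remove1[of b D a] by simp
next
  case False
  moreover have "rank D c \<noteq> rank D a"
    using False assms(1) rank_eq_rank_iff by metis
  ultimately show ?thesis
    using assms(1) rank_Cons_remove1[of c D a] by auto
qed

lemma rank_filter_less_iff:
  "P c \<Longrightarrow> P d \<Longrightarrow> rank (filter P C) c < rank (filter P C) d \<longleftrightarrow> rank C c < rank C d"
  by (induction C) auto

section \<open>Rotations and lexicographic order\<close>

definition is_rotation :: "'a list \<Rightarrow> 'a list \<Rightarrow> bool" where
  "is_rotation v x \<longleftrightarrow> (\<exists>p s. v = p @ s \<and> s \<noteq> [] \<and> x = s @ p)"

lemma set_rotations: "set (rotations v) = {x. is_rotation v x}"
proof -
  have "x \<in> set (rotations v) \<longleftrightarrow> is_rotation v x" for x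
  proof
    assume "x \<in> set (rotations v)"
    then obtain i where "i < length v" "x = drop i v @ take i v"
      by (auto simp: rotations_def rotate_drop_take)
    then show "is_rotation v x"
      unfolding is_rotation_def by (intro exI[of _ "take i v"] exI[of _ "drop i v"]) auto
  next
    assume "is_rotation v x"
    then obtain p s where "v = p @ s" "s \<noteq> []" "x = s @ p"
      by (auto simp: is_rotation_def)
    then have "length p < length v" "x = rotate (length p) v"
      by (simp_all add: rotate_drop_take)
    then show "x \<in> set (rotations v)"
      unfolding rotations_def by force
  qed
  then show ?thesis by auto
qed

lemma mset_map_last_rotations: "mset (map last (rotations v)) = mset v"
proof (cases "v = []")
  case False
  have "map last (rotations v) = rotate (length v - 1) v"
  proof (rule nth_equalityI)
    fix i assume "i < length (map last (rotations v))"
    with False show "map last (rotations v) ! i = rotate (length v - 1) v ! i"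
      by (simp add: rotations_def last_conv_nth nth_rotate add.commute)
  qed (simp add: rotations_def)
  then show ?thesis
    by (metis append_take_drop_id mset_append rotate_drop_take union_commute)
qed (simp add: rotations_def)

lemma is_rotation_length: "is_rotation v x \<Longrightarrow> length x = length v"
  and is_rotation_mset: "is_rotation v x \<Longrightarrow> mset x = mset v"
  and is_rotation_set: "is_rotation v x \<Longrightarrow> set x = set v"
  and is_rotation_nonempty: "is_rotation v x \<Longrightarrow> x \<noteq> []"
  by (auto simp: is_rotation_def)

lemma last_rotation_in_set: "is_rotation v x \<Longrightarrow> last x \<in> set v"
  using is_rotation_set is_rotation_nonempty last_in_set by metis

lemma is_rotation_split: "is_rotation (p @ c # s) (s @ p @ [c])"
  unfolding is_rotation_def
  by (cases "s = []") (auto intro: exI[of _ "[]"] exI[of _ "p @ [c]"])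

lemma is_rotation_rotate1: "is_rotation v (c # x) \<Longrightarrow> is_rotation v (x @ [c])"
proof -
  assume "is_rotation v (c # x)"
  then obtain p s where "v = p @ c # s" "x = s @ p"
    by (auto simp: is_rotation_def Cons_eq_append_conv)
  then show ?thesis
    using is_rotation_split by simp
qed

lemma is_rotation_map: "is_rotation (map \<mu> v) R \<Longrightarrow> \<exists>y. is_rotation v y \<and> R = map \<mu> y"
  unfolding is_rotation_def by (fastforce simp: map_eq_append_conv)

lemma rotation_eq_if_map_eq:
  "inj_on r (set w) \<Longrightarrow> is_rotation w x \<Longrightarrow> is_rotation w y \<Longrightarrow> map r x = map r y \<Longrightarrow> x = y"
  using map_inj_on[of r x y] is_rotation_set[of w x] is_rotation_set[of w y] by simp

lemma map_less_map_split:
  fixes r :: "'a \<Rightarrow> 'b::linorder"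
  assumes "map r x < map r y" "length x = length y" "inj_on r (set x \<union> set y)"
  shows "\<exists>c d e u v. x = c @ d # u \<and> y = c @ e # v \<and> r d < r e"
  using assms(2,1,3)
proof (induction x y rule: list_induct2)
  case (Cons p x q y)
  show ?case
  proof (cases "r p < r q")
    case True
    then show ?thesis by (intro exI[of _ "[]"]) simp
  next
    case False
    with Cons.prems(1) have pq: "r p = r q" and less: "map r x < map r y" by simp_all
    have "p = q" using inj_onD[OF Cons.prems(2) pq] by simp
    have "inj_on r (set x \<union> set y)"
      using Cons.prems(2) by (rule inj_on_subset) auto
    then obtain c d e u v where "x = c @ d # u" "y = c @ e # v" "r d < r e"
      using Cons.IH[OF less] by blast
    with \<open>p = q\<close> show ?thesis
      by (intro exI[of _ "p # c"] exI[of _ d] exI[of _ e] exI[of _ u] exI[of _ v]) simp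
  qed
qed simp

lemma map_less_map_cong:
  fixes r :: "'a \<Rightarrow> 'b::linorder" and r' :: "'a \<Rightarrow> 'c::linorder"
  assumes "\<And>c d. c \<in> S \<Longrightarrow> d \<in> S \<Longrightarrow> r c < r d \<longleftrightarrow> r' c < r' d"
    and "set x \<subseteq> S" "set y \<subseteq> S"
  shows "map r x < map r y \<longleftrightarrow> map r' x < map r' y"
proof -
  have eq: "r c = r d \<longleftrightarrow> r' c = r' d" if "c \<in> S" "d \<in> S" for c d
    using assms(1)[OF that] assms(1)[OF that(2,1)] by (metis linorder_neqE less_irrefl)
  show ?thesis
    using assms(2,3)
  proof (induction x arbitrary: y)
    case (Cons p x)
    then show ?case
      by (cases y) (simp_all add: eq assms(1))
  next
    case Nil
    then show ?case by (cases y) simp_all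
  qed
qed

lemma map_less_map_flip:
  fixes r :: "'a \<Rightarrow> 'b::linorder" and r' :: "'a \<Rightarrow> 'c::linorder"
  assumes "\<And>c d. c \<in> S \<Longrightarrow> d \<in> S \<Longrightarrow> r c < r d \<longleftrightarrow> r' d < r' c"
    and "set x \<subseteq> S" "set y \<subseteq> S" "length x = length y"
  shows "map r x < map r y \<longleftrightarrow> map r' y < map r' x"
proof -
  have eq: "r c = r d \<longleftrightarrow> r' d = r' c" if "c \<in> S" "d \<in> S" for c d
    using assms(1)[OF that] assms(1)[OF that(2,1)] by (metis linorder_neqE less_irrefl)
  show ?thesis
    using assms(4,2,3)
  proof (induction x y rule: list_induct2)
    case (Cons p x q y)
    then show ?case
      by (simp add: eq assms(1))
  qed simp
qed

lemma same_append_less_iff: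
  fixes xs :: "'a::linorder list"
  shows "zs @ xs < zs @ ys \<longleftrightarrow> xs < ys"
  by (induction zs) simp_all

lemma snoc_less_snoc_iff:
  fixes xs :: "'a::linorder list"
  shows "length xs = length ys \<Longrightarrow> xs @ [a] < ys @ [b] \<longleftrightarrow> xs < ys \<or> xs = ys \<and> a < b"
  by (induction xs ys rule: list_induct2) auto

section \<open>Clustering as a condition on rotations\<close>

text \<open>With r = rank C and \<kappa> = rank (map \<tau> C) this is \<tau>-clustering for C, see clustering_iff.\<close>
definition bwt_sorted :: "('a \<Rightarrow> nat) \<Rightarrow> ('a \<Rightarrow> nat) \<Rightarrow> 'a list \<Rightarrow> bool" where
  "bwt_sorted r \<kappa> v \<longleftrightarrow> (\<forall>x y. is_rotation v x \<longrightarrow> is_rotation v y \<longrightarrow>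
     map r x < map r y \<longrightarrow> \<kappa> (last x) \<le> \<kappa> (last y))"

lemma sorted_bwt_iff_bwt_sorted:
  assumes inj: "inj_on r (set v)"
  shows "sorted (map \<kappa> (map last (sort_key (map r) (rotations v)))) \<longleftrightarrow> bwt_sorted r \<kappa> v"
proof -
  let ?L = "sort_key (map r) (rotations v)"
  have rot: "is_rotation v (?L ! i)" if "i < length ?L" for i
    using nth_mem[OF that] by (simp add: set_rotations)
  have key_mono: "map r (?L ! i) \<le> map r (?L ! j)" if "i \<le> j" "j < length ?L" for i j
    using that sorted_iff_nth_mono[of "map (map r) ?L"] by simp
  note key_inj = rotation_eq_if_map_eq[OF inj]
  show ?thesis
  proof
    assume sorted: "sorted (map \<kappa> (map last ?L))"
    show "bwt_sorted r \<kappa> v"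
      unfolding bwt_sorted_def
    proof (intro allI impI)
      fix x y assume "is_rotation v x" "is_rotation v y" and less: "map r x < map r y"
      then obtain i j where "i < length ?L" "j < length ?L" "x = ?L ! i" "y = ?L ! j"
        by (metis in_set_conv_nth mem_Collect_eq set_rotations set_sort)
      moreover from this have "i < j"
        using key_mono[of j i] less by (meson leD leI)
      ultimately show "\<kappa> (last x) \<le> \<kappa> (last y)"
        using sorted sorted_iff_nth_mono[of "map \<kappa> (map last ?L)"] by simp
    qed
  next
    assume sorted: "bwt_sorted r \<kappa> v"
    show "sorted (map \<kappa> (map last ?L))"
      unfolding sorted_iff_nth_mono
    proof (intro allI impI)
      fix i j assume ij: "i \<le> j" "j < length (map \<kappa> (map last ?L))"
      then have "?L ! i = ?L ! j \<or> map r (?L ! i) < map r (?L ! j)"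
        using key_mono[of i j] key_inj rot by (metis order.order_iff_strict le_less_trans length_map)
      then show "map \<kappa> (map last ?L) ! i \<le> map \<kappa> (map last ?L) ! j"
        using sorted rot ij unfolding bwt_sorted_def by (auto simp del: length_sort)
    qed
  qed
qed

lemma bwt_sorted_less:
  assumes sorted: "bwt_sorted r \<kappa> w" and inj: "inj_on r (set w)"
    and x: "is_rotation w x" and y: "is_rotation w y" and less: "\<kappa> (last x) < \<kappa> (last y)"
  shows "map r x < map r y"
proof -
  have "\<not> map r y < map r x"
  proof
    assume "map r y < map r x"
    then have "\<kappa> (last y) \<le> \<kappa> (last x)"
      using sorted x y unfolding bwt_sorted_def by blast
    with less show False by simp
  qed
  moreover have "map r x \<noteq> map r y"
    using rotation_eq_if_map_eq[OF inj x y] less by auto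
  ultimately show ?thesis
    by (simp add: not_less order.order_iff_strict)
qed

lemma sort_key_eq_iff_sorted:
  assumes "mset xs = mset v" "inj_on f (set v)"
  shows "xs = sort_key f v \<longleftrightarrow> sorted (map f xs)"
  using assms sort_key_inj_key_eq[of v xs f] by auto

lemma sorted_concat_replicate:
  "sorted (map h xs) \<Longrightarrow> sorted (concat (map (\<lambda>x. replicate (g x) (h x)) xs))"
  by (induction xs) (auto simp: sorted_append)

lemma sort_key_rank:
  assumes "distinct D" "set v \<subseteq> set D"
  shows "sort_key (rank D) v = concat (map (\<lambda>c. replicate (count_list v c) c) D)"
    (is "_ = concat (map ?block D)")
proof (rule sort_key_inj_key_eq)
  show "inj_on (rank D) (set v)"
    using inj_on_rank assms(2) by (rule inj_on_subset)
  have "count (mset (concat (map ?block D))) y = count (mset v) y" for y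
  proof -
    have "count (mset (concat (map ?block D))) y = (\<Sum>c\<leftarrow>D. if c = y then count_list v y else 0)"
      by (induction D) (auto simp: count_mset)
    also have "\<dots> = count (mset v) y"
      using assms by (auto simp: sum_list_distinct_conv_sum_set count_mset count_list_0_iff)
    finally show ?thesis .
  qed
  then show "mset v = mset (concat (map ?block D))"
    by (simp add: multiset_eq_iff)
  have "map (rank D) D = [0..<length D]"
    by (rule nth_equalityI) (simp_all add: rank_nth[OF assms(1)])
  then have "sorted (map (rank D) D)" by simp
  then have "sorted (concat (map (\<lambda>c. replicate (count_list v c) (rank D c)) D))"
    by (rule sorted_concat_replicate)
  then show "sorted (map (rank D) (concat (map ?block D)))"
    by (simp add: map_concat comp_def)
qed

lemma bwt_conv_sort_key: "bwt C v = map last (sort_key (map (rank C)) (rotations v))"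
  unfolding bwt_def rank_def by (simp add: comp_def)

lemma clustering_iff:
  assumes "distinct C"
  shows "clustering C \<tau> v \<longleftrightarrow>
    set v \<subseteq> set C \<and> \<tau> permutes set C \<and> bwt_sorted (rank C) (rank (map \<tau> C)) v"
proof (cases "set v \<subseteq> set C \<and> \<tau> permutes set C")
  case True
  let ?D = "map \<tau> C"
  let ?L = "sort_key (map (rank C)) (rotations v)"
  have D: "distinct ?D" "set ?D = set C"
    using assms True by (auto simp: distinct_map permutes_inj_on permutes_image)
  have "concat (map (\<lambda>c. replicate (count_list v (\<tau> c)) (\<tau> c)) C) = sort_key (rank ?D) v"
    using sort_key_rank[OF D(1)] D(2) True by (simp add: comp_def)
  then have "clustering C \<tau> v \<longleftrightarrow> map last ?L = sort_key (rank ?D) v"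
    using True by (simp add: clustering_def bwt_conv_sort_key)
  also have "\<dots> \<longleftrightarrow> sorted (map (rank ?D) (map last ?L))"
  proof (rule sort_key_eq_iff_sorted)
    show "mset (map last ?L) = mset v"
      using mset_map_last_rotations by (metis mset_map mset_sort)
    show "inj_on (rank ?D) (set v)"
      using True D(2) inj_on_rank by (metis inj_on_subset)
  qed
  also have "\<dots> \<longleftrightarrow> bwt_sorted (rank C) (rank ?D) v"
    using True inj_on_rank by (metis inj_on_subset sorted_bwt_iff_bwt_sorted)
  finally show ?thesis
    using True by simp
qed (auto simp: clustering_def)

text \<open>D lists the alphabet C in the order of the blocks of the BWT, i.e. D = map \<tau> C.\<close>
definition clustered :: "'a list \<Rightarrow> 'a list \<Rightarrow> 'a list \<Rightarrow> bool" where
  "clustered C D v \<longleftrightarrow> distinct C \<and> distinct D \<and> set D = set C \<and> set v \<subseteq> set C \<and>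
    bwt_sorted (rank C) (rank D) v"

lemma clustering_iff_clustered:
  "distinct C \<Longrightarrow> clustering C \<tau> v \<longleftrightarrow> \<tau> permutes set C \<and> clustered C (map \<tau> C) v"
  by (auto simp: clustering_iff clustered_def distinct_map permutes_inj_on permutes_image
      permutes_in_image)

lemma clustered_imp_ex_clustering:
  assumes cl: "clustered C D v"
  shows "\<exists>\<tau>. clustering C \<tau> v"
proof -
  have C: "distinct C" and D: "distinct D" "set D = set C"
    using cl by (simp_all add: clustered_def)
  then have len: "length D = length C"
    using C distinct_card by metis
  define \<tau> where "\<tau> x = (if x \<in> set C then D ! rank C x else x)" for x
  have map: "map \<tau> C = D"
    by (rule nth_equalityI) (simp_all add: len \<tau>_def rank_nth[OF C])
  have "bij_betw \<tau> (set C) (set C)"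
  proof (rule bij_betw_imageI)
    show "inj_on \<tau> (set C)"
      using D(1) unfolding map[symmetric] distinct_map by simp
    show "\<tau> ` set C = set C"
      using D(2) map by (metis set_map)
  qed
  then have "\<tau> permutes set C"
    by (rule bij_imp_permutes) (simp add: \<tau>_def)
  then show ?thesis
    using cl map clustering_iff_clustered[OF C] by metis
qed

section \<open>Changing the orders\<close>

lemma bwt_sorted_cong:
  assumes "bwt_sorted r \<kappa> v"
    and "\<And>c d. c \<in> set v \<Longrightarrow> d \<in> set v \<Longrightarrow> r c < r d \<longleftrightarrow> r' c < r' d"
    and "\<And>c d. c \<in> set v \<Longrightarrow> d \<in> set v \<Longrightarrow> \<kappa> c \<le> \<kappa> d \<Longrightarrow> \<kappa>' c \<le> \<kappa>' d"
  shows "bwt_sorted r' \<kappa>' v"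
  unfolding bwt_sorted_def
proof (intro allI impI)
  fix x y assume x: "is_rotation v x" and y: "is_rotation v y" and less: "map r' x < map r' y"
  have "map r x < map r y"
    using less map_less_map_cong[of "set v" r r' x y] assms(2)
    by (simp add: is_rotation_set[OF x] is_rotation_set[OF y])
  then show "\<kappa>' (last x) \<le> \<kappa>' (last y)"
    using assms(1,3) x y last_rotation_in_set unfolding bwt_sorted_def by blast
qed

lemma bwt_sorted_flip:
  assumes "bwt_sorted r \<kappa> v"
    and "\<And>c d. c \<in> set v \<Longrightarrow> d \<in> set v \<Longrightarrow> r c < r d \<longleftrightarrow> r' d < r' c"
    and "\<And>c d. c \<in> set v \<Longrightarrow> d \<in> set v \<Longrightarrow> \<kappa> c \<le> \<kappa> d \<Longrightarrow> \<kappa>' d \<le> \<kappa>' c"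
  shows "bwt_sorted r' \<kappa>' v"
  unfolding bwt_sorted_def
proof (intro allI impI)
  fix x y assume x: "is_rotation v x" and y: "is_rotation v y" and less: "map r' x < map r' y"
  have "map r y < map r x"
    using less map_less_map_flip[of "set v" r' r x y] assms(2)
    by (simp add: is_rotation_set[OF x] is_rotation_set[OF y] is_rotation_length[OF x]
        is_rotation_length[OF y])
  then show "\<kappa>' (last x) \<le> \<kappa>' (last y)"
    using assms(1,3) x y last_rotation_in_set unfolding bwt_sorted_def by blast
qed

lemma clustered_map:
  assumes inj: "inj_on \<mu> (set C)" and cl: "clustered C D v"
  shows "clustered (map \<mu> C) (map \<mu> D) (map \<mu> v)"
proof -
  have D: "distinct D" "set D = set C" and v: "set v \<subseteq> set C"
    and sorted: "bwt_sorted (rank C) (rank D) v"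
    using cl by (simp_all add: clustered_def)
  have "bwt_sorted (rank (map \<mu> C)) (rank (map \<mu> D)) (map \<mu> v)"
    unfolding bwt_sorted_def
  proof (intro allI impI)
    fix R1 R2
    assume "is_rotation (map \<mu> v) R1" "is_rotation (map \<mu> v) R2"
      and less: "map (rank (map \<mu> C)) R1 < map (rank (map \<mu> C)) R2"
    then obtain y1 y2 where y: "is_rotation v y1" "is_rotation v y2" "R1 = map \<mu> y1" "R2 = map \<mu> y2"
      using is_rotation_map by metis
    have sub: "set y1 \<subseteq> set C" "set y2 \<subseteq> set C"
      using v is_rotation_set[OF y(1)] is_rotation_set[OF y(2)] by auto
    have "map (rank C) y1 < map (rank C) y2"
      using less sub rank_map[OF inj] by (simp add: y(3,4) subset_iff cong: map_cong)
    then have "rank D (last y1) \<le> rank D (last y2)"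
      using sorted y(1,2) unfolding bwt_sorted_def by blast
    moreover have "last y1 \<in> set D" "last y2 \<in> set D"
      using v D(2) last_rotation_in_set y(1,2) by blast+
    moreover have "last R1 = \<mu> (last y1)" "last R2 = \<mu> (last y2)"
      using y is_rotation_nonempty[OF y(1)] is_rotation_nonempty[OF y(2)] by (simp_all add: last_map)
    ultimately show "rank (map \<mu> D) (last R1) \<le> rank (map \<mu> D) (last R2)"
      using inj D(2) rank_map[of \<mu> D] by simp
  qed
  then show ?thesis
    using cl inj by (auto simp: clustered_def distinct_map)
qed

lemma clustered_rev:
  assumes cl: "clustered C D v"
  shows "clustered (rev C) (rev D) v"
proof -
  have C: "distinct C" and D: "distinct D" "set D = set C" and v: "set v \<subseteq> set C"
    and sorted: "bwt_sorted (rank C) (rank D) v"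
    using cl by (simp_all add: clustered_def)
  have "bwt_sorted (rank (rev C)) (rank (rev D)) v"
  proof (rule bwt_sorted_flip[OF sorted])
    fix c d assume "c \<in> set v" "d \<in> set v"
    then have "c \<in> set C" "d \<in> set C" "c \<in> set D" "d \<in> set D"
      using v D(2) by auto
    then show "rank C c < rank C d \<longleftrightarrow> rank (rev C) d < rank (rev C) c"
      and "rank D c \<le> rank D d \<Longrightarrow> rank (rev D) d \<le> rank (rev D) c"
      using C D(1) by (simp_all add: rank_rev_less_iff flip: not_less)
  qed
  then show ?thesis
    using cl by (simp add: clustered_def)
qed

lemma clustered_extend:
  assumes cl: "clustered C D v" and C': "distinct C'" and D': "distinct D'" "set D' = set C'"
    and filter_C': "filter (\<lambda>c. c \<in> set C) C' = C" and filter_D': "filter (\<lambda>c. c \<in> set C) D' = D"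
  shows "clustered C' D' v"
proof -
  have v: "set v \<subseteq> set C" and sorted: "bwt_sorted (rank C) (rank D) v"
    using cl by (simp_all add: clustered_def)
  have "bwt_sorted (rank C') (rank D') v"
  proof (rule bwt_sorted_cong[OF sorted])
    fix c d assume "c \<in> set v" "d \<in> set v"
    then have "c \<in> set C" "d \<in> set C"
      using v by auto
    then show "rank C c < rank C d \<longleftrightarrow> rank C' c < rank C' d"
      and "rank D c \<le> rank D d \<Longrightarrow> rank D' c \<le> rank D' d"
      using rank_filter_less_iff[of "\<lambda>c. c \<in> set C" c d C']
        rank_filter_less_iff[of "\<lambda>c. c \<in> set C" d c D'] filter_C' filter_D'
      by (simp_all add: not_less[symmetric])
  qed
  moreover have "set C \<subseteq> set C'"
    using filter_C' by (metis filter_is_subset)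
  ultimately show ?thesis
    using C' D' v by (auto simp: clustered_def)
qed

section \<open>Rotations of the images under alpha and alpha_tilde\<close>

lemma rotation_concat_map:
  assumes "is_rotation (concat (map f w)) R"
  shows "(\<exists>y. is_rotation w y \<and> R = concat (map f y)) \<or>
    (\<exists>p c s q q'. w = p @ c # s \<and> f c = q @ q' \<and> q \<noteq> [] \<and> q' \<noteq> [] \<and>
      R = q' @ concat (map f (s @ p)) @ q)"
proof -
  obtain P S where PS: "concat (map f w) = P @ S" "S \<noteq> []" "R = S @ P"
    using assms by (auto simp: is_rotation_def)
  then have "map f w \<noteq> []" by auto
  then obtain xss q q' yss where
    split: "map f w = xss @ (q @ q') # yss" "P = concat xss @ q" "S = q' @ concat yss"
    using concat_eq_appendD[OF PS(1)] by blast
  then obtain p c s where w: "w = p @ c # s" "map f p = xss" "f c = q @ q'" "map f s = yss"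
    by (auto simp: map_eq_append_conv)
  consider "q = []" | "q' = []" | "q \<noteq> [] \<and> q' \<noteq> []" by blast
  then show ?thesis
  proof cases
    case 1
    have "is_rotation w (c # s @ p)"
      unfolding is_rotation_def using w(1) by (intro exI[of _ p] exI[of _ "c # s"]) simp
    moreover have "R = concat (map f (c # s @ p))"
      using 1 PS(3) split(2,3) w by simp
    ultimately show ?thesis by blast
  next
    case 2
    have "is_rotation w (s @ p @ [c])"
      using w(1) is_rotation_split by simp
    moreover have "R = concat (map f (s @ p @ [c]))"
      using 2 PS(3) split(2,3) w by simp
    ultimately show ?thesis by blast
  next
    case 3
    then show ?thesis
      using PS(3) split(2,3) w
      by (intro disjI2 exI[of _ p] exI[of _ c] exI[of _ s] exI[of _ q] exI[of _ q']) simp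
  qed
qed

lemma alpha_simps [simp]:
  "alpha a b [] = []"
  "alpha a b (c # v) = c # (if c = a then b # alpha a b v else alpha a b v)"
  "alpha a b (u @ v) = alpha a b u @ alpha a b v"
  by (auto simp: alpha_def)

lemma alpha_tilde_simps [simp]:
  "alpha_tilde a b [] = []"
  "alpha_tilde a b (c # v) = (if c = a then b # a # alpha_tilde a b v else c # alpha_tilde a b v)"
  "alpha_tilde a b (u @ v) = alpha_tilde a b u @ alpha_tilde a b v"
  by (auto simp: alpha_tilde_def)

lemma set_alpha: "set (alpha a b v) \<subseteq> set v \<union> {b}"
  and set_alpha_tilde: "set (alpha_tilde a b v) \<subseteq> set v \<union> {b}"
  by (induction v) auto

lemma last_alpha: "v \<noteq> [] \<Longrightarrow> last (alpha a b v) = (if last v = a then b else last v)"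
  and last_alpha_tilde: "v \<noteq> [] \<Longrightarrow> last (alpha_tilde a b v) = last v"
  by (induction v rule: rev_induct) auto

lemma length_alpha_tilde: "length (alpha_tilde a b v) = length v + count_list v a"
  by (induction v) auto

lemma rotation_concat_map_pair:
  assumes "is_rotation (concat (map (\<lambda>c. if c = a then [p, q] else [c]) w)) R"
  shows "(\<exists>y. is_rotation w y \<and> R = concat (map (\<lambda>c. if c = a then [p, q] else [c]) y)) \<or>
    (\<exists>x. is_rotation w (x @ [a]) \<and> R = q # concat (map (\<lambda>c. if c = a then [p, q] else [c]) x) @ [p])"
  using rotation_concat_map[OF assms]
proof (elim disjE exE conjE)
  fix l c r u u'
  assume "w = l @ c # r" "(if c = a then [p, q] else [c]) = u @ u'" "u \<noteq> []" "u' \<noteq> []"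
    and R: "R = u' @ concat (map (\<lambda>c. if c = a then [p, q] else [c]) (r @ l)) @ u"
  then have "c = a" "u = [p]" "u' = [q]" "is_rotation w (r @ l @ [a])"
    using is_rotation_split by (auto split: if_splits simp: Cons_eq_append_conv)
  then show ?thesis
    using R by (intro disjI2 exI[of _ "r @ l"]) simp
qed blast

lemma rotation_alpha:
  "is_rotation (alpha a b w) R \<Longrightarrow>
    (\<exists>y. is_rotation w y \<and> R = alpha a b y) \<or> (\<exists>x. is_rotation w (x @ [a]) \<and> R = b # alpha a b x @ [a])"
  unfolding alpha_def by (rule rotation_concat_map_pair)

lemma rotation_alpha_tilde:
  "is_rotation (alpha_tilde a b w) R \<Longrightarrow>
    (\<exists>y. is_rotation w y \<and> R = alpha_tilde a b y) \<or>
    (\<exists>x. is_rotation w (x @ [a]) \<and> R = a # alpha_tilde a b x @ [b])"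
  unfolding alpha_tilde_def by (rule rotation_concat_map_pair)

text \<open>W is the image of w under a morphism such as alpha a b: its rotations are images h y of
  rotations y of w, or rotations s x cutting the image of an occurrence of a, which all end
  with the same letter l.\<close>
lemma bwt_sorted_image:
  assumes sorted: "bwt_sorted r \<kappa> w" and inj: "inj_on r (set w)"
    and rotations: "\<And>R. is_rotation W R \<Longrightarrow>
      (\<exists>y. is_rotation w y \<and> R = h y) \<or> (\<exists>x. is_rotation w (x @ [a]) \<and> R = s x)"
    and last_h: "\<And>y. is_rotation w y \<Longrightarrow> last (h y) = g (last y)"
    and last_s: "\<And>x. last (s x) = l"
    and mono: "\<And>x y. is_rotation w x \<Longrightarrow> is_rotation w y \<Longrightarrow>
      map r x < map r y \<Longrightarrow> map r' (h x) < map r' (h y)"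
    and mono_last: "\<And>c d. c \<in> set w \<Longrightarrow> d \<in> set w \<Longrightarrow> \<kappa> c \<le> \<kappa> d \<Longrightarrow> \<kappa>' (g c) \<le> \<kappa>' (g d)"
    and below: "\<And>x y. is_rotation w (x @ [a]) \<Longrightarrow> is_rotation w y \<Longrightarrow>
      map r' (h y) < map r' (s x) \<Longrightarrow> \<kappa>' (g (last y)) \<le> \<kappa>' l"
    and above: "\<And>x y. is_rotation w (x @ [a]) \<Longrightarrow> is_rotation w y \<Longrightarrow>
      map r' (s x) < map r' (h y) \<Longrightarrow> \<kappa>' l \<le> \<kappa>' (g (last y))"
  shows "bwt_sorted r' \<kappa>' W"
  unfolding bwt_sorted_def
proof (intro allI impI)
  fix R1 R2 assume R: "is_rotation W R1" "is_rotation W R2" and less: "map r' R1 < map r' R2"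
  have reflect: "map r y1 < map r y2"
    if y: "is_rotation w y1" "is_rotation w y2" and less: "map r' (h y1) < map r' (h y2)" for y1 y2
  proof -
    have "y1 \<noteq> y2" using less by auto
    then have "map r y1 \<noteq> map r y2"
      using rotation_eq_if_map_eq[OF inj y] by auto
    moreover have "\<not> map r y2 < map r y1"
      using mono[OF y(2,1)] less by auto
    ultimately show ?thesis
      by (simp add: not_less order.order_iff_strict)
  qed
  from rotations[OF R(1)] rotations[OF R(2)]
  show "\<kappa>' (last R1) \<le> \<kappa>' (last R2)"
  proof (elim disjE exE conjE)
    fix y1 y2 assume y: "is_rotation w y1" "R1 = h y1" "is_rotation w y2" "R2 = h y2"
    then have "\<kappa> (last y1) \<le> \<kappa> (last y2)"
      using sorted reflect[of y1 y2] less unfolding bwt_sorted_def by blast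
    then show ?thesis
      using y mono_last[OF last_rotation_in_set[OF y(1)] last_rotation_in_set[OF y(3)]]
      by (simp add: last_h)
  next
    fix y1 x2 assume "is_rotation w y1" "R1 = h y1" "is_rotation w (x2 @ [a])" "R2 = s x2"
    then show ?thesis
      using below less last_h last_s by simp
  next
    fix x1 y2 assume "is_rotation w (x1 @ [a])" "R1 = s x1" "is_rotation w y2" "R2 = h y2"
    then show ?thesis
      using above less last_h last_s by simp
  qed (simp add: last_s)
qed

lemma alpha_map_less:
  fixes r :: "'a \<Rightarrow> 'b::linorder"
  assumes "map r x < map r y" "length x = length y" "inj_on r (set x \<union> set y)"
  shows "map r (alpha a b x) < map r (alpha a b y)"
proof -
  obtain c d e u v where "x = c @ d # u" "y = c @ e # v" "r d < r e"
    using map_less_map_split[OF assms] by blast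
  then show ?thesis
    by (simp add: same_append_less_iff)
qed

section \<open>Applying alpha and alpha_tilde to a clustering word\<close>

text \<open>If y = b y' then x a < y' b because \<kappa> a < \<kappa> b, and these rotations cannot first differ
  in their last letter since b is the least letter; so already x < y'.\<close>
lemma alpha_split_rotation_less:
  assumes sorted: "bwt_sorted r \<kappa> w" and inj: "inj_on r (set w)"
    and b_min: "\<And>c. c \<in> set w \<Longrightarrow> c \<noteq> b \<Longrightarrow> r b < r c"
    and less: "\<kappa> a < \<kappa> b" and ab: "a \<noteq> b"
    and x: "is_rotation w (x @ [a])" and y: "is_rotation w y"
  shows "map r (b # alpha a b x @ [a]) < map r (alpha a b y)"
proof -
  obtain f y' where y_eq: "y = f # y'"
    using is_rotation_nonempty[OF y] by (cases y) auto
  have f: "f \<in> set w"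
    using is_rotation_set[OF y] y_eq by auto
  show ?thesis
  proof (cases "f = b")
    case False
    then show ?thesis
      using b_min[OF f] y_eq by simp
  next
    case True
    have y': "is_rotation w (y' @ [b])"
      using is_rotation_rotate1 y y_eq True by simp
    have len: "length x = length y'"
      using is_rotation_length[OF x] is_rotation_length[OF y'] by simp
    have "a \<in> set w"
      using is_rotation_set[OF x] by auto
    then have "\<not> r a < r b"
      using b_min ab by fastforce
    moreover have "map r (x @ [a]) < map r (y' @ [b])"
      using bwt_sorted_less[OF sorted inj x y'] less by simp
    ultimately have "map r x < map r y'"
      using len by (simp add: snoc_less_snoc_iff)
    moreover have "inj_on r (set x \<union> set y')"
      using inj is_rotation_set[OF x] is_rotation_set[OF y'] by (auto intro: inj_on_subset)
    ultimately obtain c d e u v where "x = c @ d # u" "y' = c @ e # v" "r d < r e"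
      using map_less_map_split len by blast
    then show ?thesis
      using True y_eq ab by (simp add: same_append_less_iff)
  qed
qed

lemma clustered_alpha_least:
  assumes cl: "clustered C D w" and a: "a \<in> set C" and b: "C \<noteq> []" "hd C = b"
    and succ: "rank D b = Suc (rank D a)"
  shows "clustered C (a # remove1 a D) (alpha a b w)"
proof -
  have C: "distinct C" and D: "distinct D" "set D = set C" and w: "set w \<subseteq> set C"
    and sorted: "bwt_sorted (rank C) (rank D) w"
    using cl by (simp_all add: clustered_def)
  have ab: "a \<noteq> b" and bC: "b \<in> set C"
    using succ b by auto
  let ?D' = "a # remove1 a D"
  let ?g = "\<lambda>c. if c = a then b else c"
  have rank_D': "rank ?D' (?g c) = (if rank D c \<le> rank D a then Suc (rank D c) else rank D c)"
    if "c \<in> set C" for c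
    by (rule rank_Cons_remove1_relabel) (use that bC succ D(2) in auto)
  have inj: "inj_on (rank C) (set w)"
    using inj_on_rank w by (rule inj_on_subset)
  have b_min: "rank C b < rank C c" if "c \<in> set w" "c \<noteq> b" for c
    using b that by (cases C) auto
  have "bwt_sorted (rank C) (rank ?D') (alpha a b w)"
  proof (rule bwt_sorted_image[where h = "alpha a b" and s = "\<lambda>x. b # alpha a b x @ [a]"
        and g = ?g and l = a, OF sorted inj rotation_alpha])
    show "last (alpha a b y) = ?g (last y)" if "is_rotation w y" for y
      using last_alpha is_rotation_nonempty[OF that] by metis
    show "map (rank C) (alpha a b x) < map (rank C) (alpha a b y)"
      if "is_rotation w x" "is_rotation w y" "map (rank C) x < map (rank C) y" for x y
      using that inj alpha_map_less is_rotation_length is_rotation_set by (metis sup.idem)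
    show "rank ?D' (?g c) \<le> rank ?D' (?g d)"
      if "c \<in> set w" "d \<in> set w" "rank D c \<le> rank D d" for c d
      unfolding rank_D'[OF subsetD[OF w that(1)]] rank_D'[OF subsetD[OF w that(2)]]
      using that(3) by simp
    show "rank ?D' (?g (last y)) \<le> rank ?D' a"
      if "is_rotation w (x @ [a])" "is_rotation w y"
        "map (rank C) (alpha a b y) < map (rank C) (b # alpha a b x @ [a])" for x y
    proof -
      have "map (rank C) (b # alpha a b x @ [a]) < map (rank C) (alpha a b y)"
        by (rule alpha_split_rotation_less[OF sorted inj]) (use b_min succ ab that in auto)
      with that(3) show ?thesis by (meson less_asym)
    qed
  qed simp_all
  then show ?thesis
    using C D w a bC set_alpha[of a b w] by (auto simp: clustered_def)
qed

lemma alpha_tilde_ConsE: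
  assumes "a \<noteq> b"
  obtains g t where "alpha_tilde a b (c # v) = g # t" "g \<noteq> a"
  using assms by (cases "c = a") auto

lemma alpha_tilde_Cons_map_less:
  assumes a: "a \<in> set C" and b: "b \<in> set C" and succ: "rank C b = Suc (rank C a)"
    and d: "d \<in> set C" and e: "e \<in> set C" and de: "rank C d < rank C e"
    and len: "length (alpha_tilde a b (d # u)) = length (alpha_tilde a b (e # v))"
  shows "map (rank (a # remove1 a C)) (alpha_tilde a b (d # u))
    < map (rank (a # remove1 a C)) (alpha_tilde a b (e # v))"
proof -
  let ?r' = "rank (a # remove1 a C)"
  have ab: "a \<noteq> b"
    using succ by auto
  show ?thesis
  proof (cases "d = a")
    case da: True
    show ?thesis
    proof (cases "e = b")
      case True
      with len da ab obtain g v' where "v = g # v'"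
        by (cases v) auto
      then obtain h t where "alpha_tilde a b v = h # t" "h \<noteq> a"
        using alpha_tilde_ConsE[OF ab] by metis
      with True da ab show ?thesis
        by simp
    next
      case False
      then have "rank C b < rank C e"
        using da de succ rank_eq_rank_iff[OF e, of b] by simp
      then show ?thesis
        using rank_Cons_remove1_less_iff[OF b e] da de ab False by auto
    qed
  next
    case False
    show ?thesis
    proof (cases "e = a")
      case True
      then have "rank C d < rank C b"
        using de succ by simp
      then show ?thesis
        using rank_Cons_remove1_less_iff[OF d b] False True ab by auto
    next
      case ea: False
      then show ?thesis
        using rank_Cons_remove1_less_iff[OF d e] False de by auto
    qed
  qed
qed

lemma alpha_tilde_map_less:
  assumes a: "a \<in> set C" and b: "b \<in> set C" and succ: "rank C b = Suc (rank C a)"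
    and sub: "set x \<subseteq> set C" "set y \<subseteq> set C"
    and len: "length x = length y" and count: "count_list x a = count_list y a"
    and less: "map (rank C) x < map (rank C) y"
  shows "map (rank (a # remove1 a C)) (alpha_tilde a b x) < map (rank (a # remove1 a C)) (alpha_tilde a b y)"
proof -
  obtain c d e u v where x: "x = c @ d # u" and y: "y = c @ e # v" and de: "rank C d < rank C e"
    using map_less_map_split[OF less len] inj_on_rank sub by (metis inj_on_subset le_sup_iff)
  have "length (alpha_tilde a b (d # u)) = length (alpha_tilde a b (e # v))"
    using len count x y by (simp add: length_alpha_tilde split: if_splits)
  moreover have "d \<in> set C" "e \<in> set C"
    using sub x y by auto
  ultimately show ?thesis
    using alpha_tilde_Cons_map_less[OF a b succ _ _ de] x y by (simp add: same_append_less_iff)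
qed

lemma clustered_alpha_tilde_first:
  assumes cl: "clustered C D w" and a: "a \<in> set C" and b: "D \<noteq> []" "hd D = b"
    and succ: "rank C b = Suc (rank C a)"
  shows "clustered (a # remove1 a C) D (alpha_tilde a b w)"
proof -
  have C: "distinct C" and D: "distinct D" "set D = set C" and w: "set w \<subseteq> set C"
    and sorted: "bwt_sorted (rank C) (rank D) w"
    using cl by (simp_all add: clustered_def)
  have ab: "a \<noteq> b" and bC: "b \<in> set C"
    using succ hd_in_set[OF b(1)] D(2) unfolding b(2) by auto
  let ?C' = "a # remove1 a C"
  have inj: "inj_on (rank C) (set w)"
    using inj_on_rank w by (rule inj_on_subset)
  have "bwt_sorted (rank ?C') (rank D) (alpha_tilde a b w)"
  proof (rule bwt_sorted_image[where h = "alpha_tilde a b" and s = "\<lambda>x. a # alpha_tilde a b x @ [b]"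
        and g = "\<lambda>c. c" and l = b, OF sorted inj rotation_alpha_tilde])
    show "last (alpha_tilde a b y) = last y" if "is_rotation w y" for y
      using last_alpha_tilde is_rotation_nonempty[OF that] by metis
    show "map (rank ?C') (alpha_tilde a b x) < map (rank ?C') (alpha_tilde a b y)"
      if x: "is_rotation w x" and y: "is_rotation w y" and less: "map (rank C) x < map (rank C) y"
      for x y
    proof (rule alpha_tilde_map_less[OF a bC succ _ _ _ _ less])
      show "set x \<subseteq> set C" "set y \<subseteq> set C"
        using w is_rotation_set[OF x] is_rotation_set[OF y] by auto
      show "length x = length y"
        using is_rotation_length[OF x] is_rotation_length[OF y] by simp
      show "count_list x a = count_list y a"
        using is_rotation_mset[OF x] is_rotation_mset[OF y] by (metis count_mset)
    qed
    show "rank D (last y) \<le> rank D b"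
      if "is_rotation w (x @ [a])" and y: "is_rotation w y"
        and less: "map (rank ?C') (alpha_tilde a b y) < map (rank ?C') (a # alpha_tilde a b x @ [b])"
      for x y
    proof -
      obtain f y' where "y = f # y'"
        using is_rotation_nonempty[OF y] by (cases y) auto
      then obtain g t where "alpha_tilde a b y = g # t" "g \<noteq> a"
        using alpha_tilde_ConsE[OF ab] by metis
      with less show ?thesis by simp
    qed
    show "rank D b \<le> rank D (last y)" for y
      using b by (cases D) auto
  qed simp_all
  moreover have "distinct ?C'" "set ?C' = set C"
    using C a by auto
  ultimately show ?thesis
    using D w bC set_alpha_tilde[of a b w] by (auto simp: clustered_def)
qed

lemma rev_remove1_rev: "distinct xs \<Longrightarrow> rev (remove1 a (rev xs)) = remove1 a xs"
  by (simp add: distinct_remove1_removeAll removeAll_filter_not_eq rev_filter)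

lemma clustered_alpha_greatest:
  assumes cl: "clustered C D w" and a: "a \<in> set C" and b: "C \<noteq> []" "last C = b"
    and succ: "rank D a = Suc (rank D b)"
  shows "clustered C (remove1 a D @ [a]) (alpha a b w)"
proof -
  have D: "distinct D" "set D = set C"
    using cl by (simp_all add: clustered_def)
  have "b \<in> set D" "a \<in> set D"
    using a last_in_set[OF b(1)] D(2) unfolding b(2) by simp_all
  then have "rank (rev D) b = length D - Suc (rank D b)" "rank (rev D) a = length D - Suc (rank D a)"
    "rank D a < length D"
    by (simp_all add: rank_rev D(1) rank_less_length)
  then have "rank (rev D) b = Suc (rank (rev D) a)"
    using succ by simp
  then have "clustered (rev C) (a # remove1 a (rev D)) (alpha a b w)"
    using clustered_alpha_least[OF clustered_rev[OF cl]] a b by (simp add: hd_rev)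
  from clustered_rev[OF this] show ?thesis
    using D(1) by (simp add: rev_remove1_rev)
qed

lemma clustered_alpha_tilde_last:
  assumes cl: "clustered C D w" and a: "a \<in> set C" and b: "D \<noteq> []" "last D = b"
    and succ: "rank C a = Suc (rank C b)"
  shows "clustered (remove1 a C @ [a]) D (alpha_tilde a b w)"
proof -
  have C: "distinct C" and "set D = set C"
    using cl by (simp_all add: clustered_def)
  then have "b \<in> set C"
    using last_in_set[OF b(1)] unfolding b(2) by simp
  then have "rank (rev C) b = length C - Suc (rank C b)" "rank (rev C) a = length C - Suc (rank C a)"
    "rank C a < length C"
    using a by (simp_all add: rank_rev C rank_less_length)
  then have "rank (rev C) b = Suc (rank (rev C) a)"
    using succ by simp
  then have "clustered (a # remove1 a (rev C)) (rev D) (alpha_tilde a b w)"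
    using clustered_alpha_tilde_first[OF clustered_rev[OF cl]] a b by (simp add: hd_rev)
  from clustered_rev[OF this] show ?thesis
    using C by (simp add: rev_remove1_rev)
qed

text \<open>Insert b just before a in D: as b does not occur in w, w stays clustered, and now b is the
  greatest letter and a directly follows it in the BWT order.\<close>
lemma clustered_alpha_fresh_greatest:
  assumes cl: "clustered C D w" and a: "a \<in> set C" and b: "b \<notin> set C"
  shows "\<exists>D'. clustered (C @ [b]) D' (alpha a b w)"
proof -
  have C: "distinct C" and D: "distinct D" "set D = set C"
    using cl by (simp_all add: clustered_def)
  define xs ys where "xs = takeWhile (\<lambda>x. x \<noteq> a) D" and "ys = dropWhile (\<lambda>x. x \<noteq> a) D"
  have D_eq: "D = xs @ ys"
    by (simp add: xs_def ys_def)
  have "a \<in> set D"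
    using a D(2) by simp
  then have "\<exists>t. ys = a # t"
    unfolding ys_def by (induction D) auto
  then obtain t where ys: "ys = a # t" ..
  have "x \<in> set D" "x \<noteq> a" if "x \<in> set xs" for x
    using set_takeWhileD[OF that[unfolded xs_def]] by simp_all
  then have xs: "a \<notin> set xs" "b \<notin> set xs"
    using b D(2) by blast+
  have "clustered (C @ [b]) (xs @ b # ys) w"
  proof (rule clustered_extend[OF cl])
    show "distinct (C @ [b])" "distinct (xs @ b # ys)" "set (xs @ b # ys) = set (C @ [b])"
      using C D b unfolding D_eq by auto
    show "filter (\<lambda>c. c \<in> set C) (C @ [b]) = C"
      using b by simp
    have "filter (\<lambda>c. c \<in> set C) D = D"
      using D(2) by (simp add: filter_id_conv)
    then show "filter (\<lambda>c. c \<in> set C) (xs @ b # ys) = D"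
      using b unfolding D_eq by simp
  qed
  moreover have "rank (xs @ b # ys) a = Suc (rank (xs @ b # ys) b)"
    using xs ys a b by (auto simp: rank_append)
  ultimately show ?thesis
    using clustered_alpha_greatest[of "C @ [b]" "xs @ b # ys" w a b] a by auto
qed

lemma clustered_alpha_fresh_least:
  assumes "clustered C D w" and "a \<in> set C" and "b \<notin> set C"
  shows "\<exists>D'. clustered (b # C) D' (alpha a b w)"
proof -
  obtain D' where "clustered (rev C @ [b]) D' (alpha a b w)"
    using clustered_alpha_fresh_greatest[OF clustered_rev[OF assms(1)]] assms(2,3) by auto
  from clustered_rev[OF this] show ?thesis
    by auto
qed

lemma clustered_append:
  assumes cl: "clustered C D v" and B: "distinct B" "set B \<inter> set C = {}"
  shows "clustered (C @ B) (D @ B) v"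
proof (rule clustered_extend[OF cl])
  have C: "distinct C" and D: "distinct D" "set D = set C"
    using cl by (simp_all add: clustered_def)
  then show "distinct (C @ B)" "distinct (D @ B)" "set (D @ B) = set (C @ B)"
    using B by auto
  show "filter (\<lambda>c. c \<in> set C) (C @ B) = C" "filter (\<lambda>c. c \<in> set C) (D @ B) = D"
    using B D(2) by (auto simp: filter_id_conv filter_empty_conv)
qed

lemma remove1_nth:
  "distinct xs \<Longrightarrow> i < length xs \<Longrightarrow> remove1 (xs ! i) xs = take i xs @ drop (Suc i) xs"
  by (metis distinct_take id_take_nth_drop remove1.simps(2) remove1_append
      not_distinct_conv_prefix)

lemma nth_map_permutes:
  assumes "\<pi> permutes set A" "i < length A" "inv \<pi> c = A ! i"
  shows "map \<pi> A ! i = c"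
  using assms by (simp add: permutes_inv_eq)

theorem lemma6p5:
  fixes A :: "'a list" and w :: "'a list" and \<pi> :: "'a \<Rightarrow> 'a" and a b :: 'a
  assumes "distinct A" and "primitive w" and "clustering A \<pi> w" and "a \<noteq> b"
  shows
   "(\<forall>\<mu>. \<mu> permutes set A \<longrightarrow> (\<exists>\<pi>'. clustering (map \<mu> A) \<pi>' (map \<mu> w)))
  \<and> (\<forall>i. a \<in> set A \<and> b = A ! 0 \<and> i + 1 < length A \<and> inv \<pi> a = A ! i \<and> inv \<pi> b = A ! (i + 1)
        \<longrightarrow> (\<exists>\<pi>'. clustering A \<pi>' (alpha a b w)))
  \<and> (\<forall>i. a \<in> set A \<and> b = A ! (length A - 1) \<and> i + 1 < length A \<and> inv \<pi> b = A ! i \<and> inv \<pi> a = A ! (i + 1)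
        \<longrightarrow> (\<exists>\<pi>'. clustering A \<pi>' (alpha a b w)))
  \<and> (\<forall>i. inv \<pi> b = A ! 0 \<and> i + 1 < length A \<and> a = A ! i \<and> b = A ! (i + 1)
        \<longrightarrow> (\<exists>\<pi>'. clustering (A ! i # take i A @ drop (i + 1) A) \<pi>' (alpha_tilde a b w)))
  \<and> (\<forall>i. inv \<pi> b = A ! (length A - 1) \<and> i + 1 < length A \<and> b = A ! i \<and> a = A ! (i + 1)
        \<longrightarrow> (\<exists>\<pi>'. clustering (take (i + 1) A @ drop (i + 2) A @ [A ! (i + 1)]) \<pi>' (alpha_tilde a b w)))
  \<and> (a \<in> set A \<and> b \<notin> set A \<longrightarrow>
        (\<exists>\<pi>'. clustering (A @ [b]) \<pi>' (alpha a b w)) \<and> (\<exists>\<pi>''. clustering (b # A) \<pi>'' (alpha a b w)))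
  \<and> (\<forall>B. distinct B \<and> set B \<inter> set A = {} \<longrightarrow> (\<exists>\<pi>'. clustering (A @ B) \<pi>' w))"
proof (intro conjI allI impI)
  let ?D = "map \<pi> A"
  have A: "distinct A" and \<pi>: "\<pi> permutes set A" and cl: "clustered A ?D w"
    using assms(1,3) clustering_iff_clustered by blast+
  have D: "distinct ?D" "length ?D = length A"
    using cl by (simp_all add: clustered_def)
  have nth_D: "?D ! i = c" and rank_D: "rank ?D c = i"
    if "i < length A" "inv \<pi> c = A ! i" for c i
    using nth_map_permutes[OF \<pi> that] rank_nth[OF D(1)] that(1) D(2) by auto
  have rank_A: "rank A (A ! i) = i" if "i < length A" for i
    using rank_nth[OF A that] .
  note ex = clustered_imp_ex_clustering
  show "\<exists>\<pi>'. clustering (map \<mu> A) \<pi>' (map \<mu> w)" if "\<mu> permutes set A" for \<mu>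
    using ex[OF clustered_map[OF permutes_inj_on[OF that] cl]] .
  show "\<exists>\<pi>'. clustering A \<pi>' (alpha a b w)"
    if "a \<in> set A \<and> b = A ! 0 \<and> i + 1 < length A \<and> inv \<pi> a = A ! i \<and> inv \<pi> b = A ! (i + 1)" for i
    using ex[OF clustered_alpha_least[OF cl, of a b]] that rank_D[of i a] rank_D[of "i + 1" b]
    by (auto simp: hd_conv_nth simp flip: length_greater_0_conv)
  show "\<exists>\<pi>'. clustering A \<pi>' (alpha a b w)"
    if "a \<in> set A \<and> b = A ! (length A - 1) \<and> i + 1 < length A \<and> inv \<pi> b = A ! i \<and> inv \<pi> a = A ! (i + 1)"
    for i
    using ex[OF clustered_alpha_greatest[OF cl, of a b]] that rank_D[of i b] rank_D[of "i + 1" a]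
    by (auto simp: last_conv_nth simp flip: length_greater_0_conv)
  show "\<exists>\<pi>'. clustering (A ! i # take i A @ drop (i + 1) A) \<pi>' (alpha_tilde a b w)"
    if "inv \<pi> b = A ! 0 \<and> i + 1 < length A \<and> a = A ! i \<and> b = A ! (i + 1)" for i
    using ex[OF clustered_alpha_tilde_first[OF cl, of a b]] that nth_D[of 0 b] rank_A[of i] rank_A[of "i + 1"]
    by (auto simp: hd_conv_nth remove1_nth[OF A] simp flip: length_greater_0_conv)
  show "\<exists>\<pi>'. clustering (take (i + 1) A @ drop (i + 2) A @ [A ! (i + 1)]) \<pi>' (alpha_tilde a b w)"
    if "inv \<pi> b = A ! (length A - 1) \<and> i + 1 < length A \<and> b = A ! i \<and> a = A ! (i + 1)" for i
    using ex[OF clustered_alpha_tilde_last[OF cl, of a b]] that nth_D[of "length A - 1" b]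
      rank_A[of i] rank_A[of "i + 1"]
    by (auto simp: last_conv_nth remove1_nth[OF A] simp flip: length_greater_0_conv)
  show "\<exists>\<pi>'. clustering (A @ [b]) \<pi>' (alpha a b w)" if "a \<in> set A \<and> b \<notin> set A"
    using clustered_alpha_fresh_greatest[OF cl] that ex by blast
  show "\<exists>\<pi>''. clustering (b # A) \<pi>'' (alpha a b w)" if "a \<in> set A \<and> b \<notin> set A"
    using clustered_alpha_fresh_least[OF cl] that ex by blast
  show "\<exists>\<pi>'. clustering (A @ B) \<pi>' w" if "distinct B \<and> set B \<inter> set A = {}" for B
    using ex[OF clustered_append[OF cl]] that by blast
qed

end
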